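(* Let $\mathbf{C}=\mathbf{C}_1\,\dot\cup\,\mathbf{C}_2$ and $\mathbf{B}=\mathbf{B}_+\,\dot\cup\,\mathbf{B}'\in\dot{\mathbb{P}}(\mathbb{L}(\mathbf{C}_1))$ with $|\mathbf{B}|=|\mathbf{C}_1|$. Suppose every $L\in\mathbf{B}_+$ has a positive monotonic effect on $D$ relative to $\mathbf{C}$, and $\mathbf{W}$ suffices to adjust for confounding of $\mathbf{C}$ on $D$. If for some tree $\mathfrak{T}$ on $\mathbf{B}_+$ and some values $\mathbf{c}_2,\mathbf{w}$ (all conditioning events having positive probability) $$E[D\mid\mathbf{B}=\mathbf{1},\mathbf{C}_2=\mathbf{c}_2,\mathbf{W}=\mathbf{w}]-\sum_{L\in\mathbf{B}}E[D\mid\mathbf{B}\setminus\{L\}=\mathbf{1},L=0,\mathbf{C}_2=\mathbf{c}_2,\mathbf{W}=\mathbf{w}]+\sum_{\mathbf{E}\in\mathfrak{T}}E[D\mid\mathbf{B}\setminus\mathbf{E}=\mathbf{1},\mathbf{E}=\mathbf{0},\mathbf{C}_2=\mathbf{c}_2,\mathbf{W}=\mathbf{w}]>0,$$ then $\mathbf{B}$ is irreducible for $\mathcal{D}(\mathbf{C},\Omega)$.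
   Context: $\Omega$ is a population with a probability distribution; events are binary random variables; $\overline{X}=1-X$; $\mathbb{L}(\mathbf{C})=\mathbf{C}\cup\{\overline{X}:X\in\mathbf{C}\}$; $\dot{\mathbb{P}}(\mathbb{L}(\mathbf{C}))$ is the set of subsets of $\mathbb{L}(\mathbf{C})$ not containing both $X$ and $\overline{X}$; $(L)_{\mathbf{c}}$ is the value of literal $L$ under assignment $\mathbf{c}$; $\bigwedge(\mathbf{B})=\min_{L\in\mathbf{B}}L$. Potential outcomes: $D_{\mathbf{c}}(\omega)\in\{0,1\}$; observed $\mathbf{C},D$ satisfy consistency $D(\omega)=D_{\mathbf{C}(\omega)}(\omega)$. Conditioning events like $\{\mathbf{B}\setminus\mathbf{E}=\mathbf{1},\mathbf{E}=\mathbf{0}\}$ mean literals in $\mathbf{E}$ equal 0 and other literals of $\mathbf{B}$ equal 1. $\mathbf{W}$ suffices to adjust for confounding of $\mathbf{C}$ on $D$ if $D_{\mathbf{c}}$ is independent of $\mathbf{C}$ given $\mathbf{W}=\mathbf{w}$ for all $\mathbf{c},\mathbf{w}$. A literal $L$ has a positive monotonic effect on $D$ relative to $\mathbf{C}$ if for all $\omega$ and all assignments $\mathbf{c},\mathbf{c}'$ differing only in the variable underlying $L$ with $(L)_{\mathbf{c}}=1,(L)_{\mathbf{c}'}=0$, $D_{\mathbf{c}}(\omega)\ge D_{\mathbf{c}'}(\omega)$. A tree on a finite set $\mathbf{S}$ is a set $\mathfrak{T}$ of 2-element subsets of $\mathbf{S}$ with $|\mathfrak{T}|=|\mathbf{S}|-1$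 connecting all elements (empty if $|\mathbf{S}|\le1$). A sufficient cause representation $(\mathbf{A},\mathfrak{B})$ for $\mathcal{D}(\mathbf{C},\Omega)$: binary $\mathbf{A}=\langle A_1,\dots,A_p\rangle$ unaffected by interventions on $\mathbf{C}$ and $\mathfrak{B}=\langle\mathbf{B}_1,\dots,\mathbf{B}_p\rangle\subseteq\dot{\mathbb{P}}(\mathbb{L}(\mathbf{C}))$ with $D_{\mathbf{c}}(\omega)=1$ iff some $j$ has $A_j(\omega)=1$ and $(\bigwedge(\mathbf{B}_j))_{\mathbf{c}}=1$. $\mathbf{B}$ is irreducible for $\mathcal{D}(\mathbf{C},\Omega)$ if every such representation has some $\mathbf{B}_i\supseteq\mathbf{B}$. *)

theory Defs
  imports "HOL-Probability.Probability"
begin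

(* Variables are indexed by a type 'i.  A literal is a pair (i, pol):
   (i, True) stands for the variable X_i, (i, False) for its complement 1 - X_i.
   Binary values 0/1 are represented by False/True. *)

type_synonym 'i literal = "'i \<times> bool"

definition lits :: "'i set \<Rightarrow> 'i literal set" where
  "lits C = C \<times> UNIV"

definition consistent_lits :: "'i set \<Rightarrow> 'i literal set \<Rightarrow> bool" where
  "consistent_lits C B \<longleftrightarrow> B \<subseteq> lits C \<and> \<not> (\<exists>i. (i, True) \<in> B \<and> (i, False) \<in> B)"

definition lit_val :: "'i literal \<Rightarrow> ('i \<Rightarrow> bool) \<Rightarrow> bool" where
  "lit_val L c = (if snd L then c (fst L) else \<not> c (fst L))"

definition conj_val :: "'i literal set \<Rightarrow> ('i \<Rightarrow> bool) \<Rightarrow> bool" where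
  "conj_val B c \<longleftrightarrow> (\<forall>L\<in>B. lit_val L c)"

definition assignment :: "'i set \<Rightarrow> ('i \<Rightarrow> bool) \<Rightarrow> bool" where
  "assignment C c \<longleftrightarrow> (\<forall>i. i \<notin> C \<longrightarrow> c i = False)"

definition obs :: "'i set \<Rightarrow> ('i \<Rightarrow> 'w \<Rightarrow> bool) \<Rightarrow> 'w \<Rightarrow> 'i \<Rightarrow> bool" where
  "obs C X \<omega> = (\<lambda>i. if i \<in> C then X i \<omega> else False)"

definition cond_prob :: "'w measure \<Rightarrow> 'w set \<Rightarrow> 'w set \<Rightarrow> real" where
  "cond_prob M A S = measure M (A \<inter> S) / measure M S"

definition cond_exp_bin :: "'w measure \<Rightarrow> ('w \<Rightarrow> bool) \<Rightarrow> 'w set \<Rightarrow> real" where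
  "cond_exp_bin M D S = (\<integral>\<omega>. indicator S \<omega> * (if D \<omega> then 1 else 0) \<partial>M) / measure M S"

(* W suffices to adjust for confounding of C on D:
   D_c is independent of (the random vector) C given W = w, for all c, w *)
definition adjusts :: "'w measure \<Rightarrow> 'i set \<Rightarrow> ('i \<Rightarrow> 'w \<Rightarrow> bool) \<Rightarrow> (('i \<Rightarrow> bool) \<Rightarrow> 'w \<Rightarrow> bool)
    \<Rightarrow> ('w \<Rightarrow> 'v) \<Rightarrow> bool" where
  "adjusts M C X Dpo W \<longleftrightarrow>
     (\<forall>c w. assignment C c \<longrightarrow> measure M {\<omega> \<in> space M. W \<omega> = w} > 0 \<longrightarrow>
       (\<forall>e c'. assignment C c' \<longrightarrow>
          cond_prob M ({\<omega> \<in> space M. Dpo c \<omega> = e} \<inter> {\<omega> \<in> space M. obs C X \<omega> = c'})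
                      {\<omega> \<in> space M. W \<omega> = w}
          = cond_prob M {\<omega> \<in> space M. Dpo c \<omega> = e} {\<omega> \<in> space M. W \<omega> = w}
            * cond_prob M {\<omega> \<in> space M. obs C X \<omega> = c'} {\<omega> \<in> space M. W \<omega> = w}))"

definition pos_monotonic :: "'w set \<Rightarrow> 'i set \<Rightarrow> (('i \<Rightarrow> bool) \<Rightarrow> 'w \<Rightarrow> bool) \<Rightarrow> 'i literal \<Rightarrow> bool" where
  "pos_monotonic \<Omega> C Dpo L \<longleftrightarrow>
     (\<forall>\<omega>\<in>\<Omega>. \<forall>c c'. assignment C c \<longrightarrow> assignment C c' \<longrightarrow>
        (\<forall>i. i \<noteq> fst L \<longrightarrow> c i = c' i) \<longrightarrow> lit_val L c \<longrightarrow> \<not> lit_val L c' \<longrightarrow>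
        (Dpo c' \<omega> \<longrightarrow> Dpo c \<omega>))"

definition is_tree :: "'a set \<Rightarrow> 'a set set \<Rightarrow> bool" where
  "is_tree S T \<longleftrightarrow>
     (\<forall>E\<in>T. E \<subseteq> S \<and> card E = 2) \<and> card T = card S - 1 \<and>
     (\<forall>x\<in>S. \<forall>y\<in>S. (x, y) \<in> {(u, v). {u, v} \<in> T}\<^sup>*)"

definition suff_cause_rep :: "'w set \<Rightarrow> 'i set \<Rightarrow> (('i \<Rightarrow> bool) \<Rightarrow> 'w \<Rightarrow> bool)
    \<Rightarrow> (('w \<Rightarrow> bool) \<times> 'i literal set) list \<Rightarrow> bool" where
  "suff_cause_rep \<Omega> C Dpo R \<longleftrightarrow>
     (\<forall>(A, B)\<in>set R. consistent_lits C B) \<and>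
     (\<forall>\<omega>\<in>\<Omega>. \<forall>c. assignment C c \<longrightarrow>
        (Dpo c \<omega> \<longleftrightarrow> (\<exists>(A, B)\<in>set R. A \<omega> \<and> conj_val B c)))"

definition irreducible :: "'w set \<Rightarrow> 'i set \<Rightarrow> (('i \<Rightarrow> bool) \<Rightarrow> 'w \<Rightarrow> bool) \<Rightarrow> 'i literal set \<Rightarrow> bool" where
  "irreducible \<Omega> C Dpo B \<longleftrightarrow>
     (\<forall>R. suff_cause_rep \<Omega> C Dpo R \<longrightarrow> (\<exists>(A, Bi)\<in>set R. B \<subseteq> Bi))"

definition cond_event :: "'w measure \<Rightarrow> ('i \<Rightarrow> 'w \<Rightarrow> bool) \<Rightarrow> 'i literal set \<Rightarrow> 'i literal set
    \<Rightarrow> 'i set \<Rightarrow> ('i \<Rightarrow> bool) \<Rightarrow> ('w \<Rightarrow> 'v) \<Rightarrow> 'v \<Rightarrow> 'w set" where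
  "cond_event M X B E C2 c2 W w =
     {\<omega> \<in> space M. (\<forall>L\<in>B. lit_val L (\<lambda>i. X i \<omega>) \<longleftrightarrow> L \<notin> E) \<and>
                  (\<forall>i\<in>C2. X i \<omega> = c2 i) \<and> W \<omega> = w}"

end

theory Submission
  imports Defs
begin

text \<open>Write \<open>c\<^sub>E\<close> for the value of \<open>C\<close> on the event \<open>{B - E = 1, E = 0, C\<^sub>2 = c\<^sub>2}\<close>. By consistency
  and adjustment by \<open>W\<close>, each conditional expectation in the hypothesis equals
  \<open>P(D(c\<^sub>E) = 1, W = w) / P(W = w)\<close>. If no sufficient cause contained \<open>B\<close>, then pointwise
  \<open>D(c\<^bsub>{}\<^esub>) + (\<Sum>E\<in>T. D(c\<^sub>E)) \<le> (\<Sum>L\<in>B. D(c\<^bsub>{L}\<^esub>))\<close>, and integrating contradicts the positive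
  contrast. Indeed, if \<open>D(c\<^bsub>{}\<^esub>) = 1\<close>, an active sufficient cause misses some \<open>L \<in> B\<close> and stays
  active at \<open>c\<^bsub>{L}\<^esub>\<close>. By positive monotonicity, \<open>D(c\<^bsub>{L,L'}\<^esub>) = 1\<close> forces \<open>D(c\<^bsub>{L}\<^esub>) = D(c\<^bsub>{L'}\<^esub>) = 1\<close>
  and \<open>D(c\<^bsub>{L}\<^esub>) = 1\<close> forces \<open>D(c\<^bsub>{}\<^esub>) = 1\<close> for \<open>L \<in> B\<^sub>+\<close>; so the edges counted on the left lie
  inside the set of counted singletons, and a tree has fewer edges inside a nonempty vertex set
  than the set has vertices.\<close>

definition graph_conn :: "'a set set \<Rightarrow> ('a \<times> 'a) set" where
  "graph_conn F = {(u, v). {u, v} \<in> F}\<^sup>*"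

definition num_components :: "'a set \<Rightarrow> 'a set set \<Rightarrow> nat" where
  "num_components V F = card ((\<lambda>x. graph_conn F `` {x}) ` V)"

lemma equiv_graph_conn: "equiv UNIV (graph_conn F)"
proof -
  have "sym {(u, v). {u, v} \<in> F}" by (auto intro: symI simp: insert_commute)
  then show ?thesis
    unfolding graph_conn_def equiv_def by (simp add: refl_rtrancl trans_rtrancl sym_rtrancl)
qed

lemma graph_conn_refl: "(x, x) \<in> graph_conn F"
  unfolding graph_conn_def by simp

lemma graph_conn_sym: "(x, y) \<in> graph_conn F \<Longrightarrow> (y, x) \<in> graph_conn F"
  using equiv_graph_conn[of F] unfolding equiv_def by (meson symD)

lemma graph_conn_trans: "(x, y) \<in> graph_conn F \<Longrightarrow> (y, z) \<in> graph_conn F \<Longrightarrow> (x, z) \<in> graph_conn F"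
  using equiv_graph_conn[of F] unfolding equiv_def by (meson transD)

lemma graph_conn_class_eq_iff:
  "graph_conn F `` {x} = graph_conn F `` {y} \<longleftrightarrow> (x, y) \<in> graph_conn F"
  by (rule eq_equiv_class_iff[OF equiv_graph_conn]) simp_all

lemma graph_conn_edge: "{u, v} \<in> F \<Longrightarrow> (u, v) \<in> graph_conn F"
  unfolding graph_conn_def by blast

lemma graph_conn_mono: "F \<subseteq> G \<Longrightarrow> graph_conn F \<subseteq> graph_conn G"
  unfolding graph_conn_def by (rule rtrancl_mono) blast

lemma graph_conn_closed:
  assumes "(x, y) \<in> graph_conn F" "x \<in> S" "\<And>E. E \<in> F \<Longrightarrow> E \<inter> S \<noteq> {} \<Longrightarrow> E \<subseteq> S"
  shows "y \<in> S"
  using assms(1,2) unfolding graph_conn_def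
proof (induction rule: rtrancl_induct)
  case (step y z)
  then show ?case using assms(3)[of "{y, z}"] by auto
qed

lemma graph_conn_insert:
  assumes "(x, y) \<in> graph_conn (insert {a, b} F)"
  shows "(x, y) \<in> graph_conn F \<or> {x, y} \<subseteq> graph_conn F `` {a, b}"
  using assms unfolding graph_conn_def[of "insert {a, b} F"]
proof (induction rule: rtrancl_induct)
  case base
  then show ?case by (simp add: graph_conn_refl)
next
  case (step y z)
  let ?K = "graph_conn F `` {a, b}"
  have closed: "q \<in> ?K" if "p \<in> ?K" "(p, q) \<in> graph_conn F" for p q
  proof -
    from that(1) obtain u where "u \<in> {a, b}" "(u, p) \<in> graph_conn F" by blast
    then show ?thesis using graph_conn_trans[OF _ that(2)] by blast
  qed
  show ?case
  proof (cases "{y, z} \<in> F")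
    case True
    then have yz: "(y, z) \<in> graph_conn F" by (rule graph_conn_edge)
    from step.IH show ?thesis
    proof
      assume "(x, y) \<in> graph_conn F"
      then show ?thesis using graph_conn_trans[OF _ yz] by blast
    next
      assume "{x, y} \<subseteq> ?K"
      then show ?thesis using closed[OF _ yz] by simp
    qed
  next
    case False
    moreover have "{y, z} \<in> insert {a, b} F" using step.hyps(2) by simp
    ultimately have "{y, z} = {a, b}" by blast
    then have "y \<in> {a, b}" "z \<in> {a, b}" by blast+
    then have yz: "y \<in> ?K" "z \<in> ?K" by (blast intro: ImageI[OF graph_conn_refl])+
    from step.IH have "x \<in> ?K"
    proof
      assume "(x, y) \<in> graph_conn F"
      then show ?thesis by (rule closed[OF yz(1) graph_conn_sym])
    next
      assume "{x, y} \<subseteq> ?K"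
      then show ?thesis by blast
    qed
    then show ?thesis using yz by simp
  qed
qed

text \<open>Adding the edge \<open>{a, b}\<close> maps each component into the enlarged one containing it, and this
  map is injective away from the component of \<open>b\<close>.\<close>

lemma num_components_insert:
  assumes "finite V"
  shows "num_components V F \<le> num_components V (insert {a, b} F) + 1"
proof -
  let ?F' = "insert {a, b} F"
  let ?Q = "(\<lambda>x. graph_conn F `` {x}) ` V"
  let ?merge = "\<lambda>X. graph_conn ?F' `` X"
  let ?b = "graph_conn F `` {b}"
  have sub: "graph_conn F \<subseteq> graph_conn ?F'" by (rule graph_conn_mono) blast
  have merge_class: "?merge (graph_conn F `` {x}) = graph_conn ?F' `` {x}" for x
  proof
    show "?merge (graph_conn F `` {x}) \<subseteq> graph_conn ?F' `` {x}"
    proof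
      fix z assume "z \<in> ?merge (graph_conn F `` {x})"
      then obtain y where "(x, y) \<in> graph_conn F" "(y, z) \<in> graph_conn ?F'" by blast
      then have "(x, z) \<in> graph_conn ?F'" by (rule graph_conn_trans[OF subsetD[OF sub]])
      then show "z \<in> graph_conn ?F' `` {x}" by simp
    qed
    show "graph_conn ?F' `` {x} \<subseteq> ?merge (graph_conn F `` {x})"
    proof
      fix z assume "z \<in> graph_conn ?F' `` {x}"
      then have "(x, z) \<in> graph_conn ?F'" by simp
      then show "z \<in> ?merge (graph_conn F `` {x})" by (rule ImageI) (simp add: graph_conn_refl)
    qed
  qed
  have image_merge: "(\<lambda>x. graph_conn ?F' `` {x}) ` V = ?merge ` ?Q"
    by (simp add: image_image merge_class)
  have "inj_on ?merge (?Q - {?b})"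
  proof (rule inj_onI)
    have away_from_b: "\<exists>x. Z = graph_conn F `` {x} \<and> (x, b) \<notin> graph_conn F"
      if "Z \<in> ?Q - {?b}" for Z
      using that graph_conn_class_eq_iff[of F _ b] by blast
    fix X Y assume "X \<in> ?Q - {?b}" "Y \<in> ?Q - {?b}" and eq: "?merge X = ?merge Y"
    then obtain x y where x: "X = graph_conn F `` {x}" "(x, b) \<notin> graph_conn F"
      and y: "Y = graph_conn F `` {y}" "(y, b) \<notin> graph_conn F"
      using away_from_b by meson
    have "(x, y) \<in> graph_conn ?F'"
      using eq unfolding x y merge_class graph_conn_class_eq_iff .
    then have "(x, y) \<in> graph_conn F"
    proof (rule graph_conn_insert[THEN disjE])
      assume "{x, y} \<subseteq> graph_conn F `` {a, b}"
      then have "(a, x) \<in> graph_conn F \<or> (b, x) \<in> graph_conn F"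
        and "(a, y) \<in> graph_conn F \<or> (b, y) \<in> graph_conn F" by auto
      then have "(a, x) \<in> graph_conn F" "(a, y) \<in> graph_conn F"
        using x(2) y(2) by (meson graph_conn_sym)+
      then show ?thesis by (rule graph_conn_trans[OF graph_conn_sym])
    qed
    then show "X = Y" unfolding x y graph_conn_class_eq_iff .
  qed
  then have "card (?Q - {?b}) = card (?merge ` (?Q - {?b}))"
    by (rule card_image[symmetric])
  also have "\<dots> \<le> card (?merge ` ?Q)"
    using assms by (intro card_mono) auto
  finally have "card (?Q - {?b}) \<le> card (?merge ` ?Q)" .
  moreover have "card ?Q - 1 \<le> card (?Q - {?b})"
    using diff_card_le_card_Diff[of "{?b}" ?Q] by simp
  ultimately show ?thesis
    unfolding num_components_def image_merge by linarith
qed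

lemma num_components_union:
  assumes "finite V" "finite G" "\<And>E. E \<in> G \<Longrightarrow> card E = 2"
  shows "num_components V F \<le> num_components V (F \<union> G) + card G"
  using assms(2,3)
proof (induction G rule: finite_induct)
  case (insert E G)
  obtain a b where E: "E = {a, b}" using insert.prems by (meson card_2_iff insertI1)
  have "num_components V F \<le> num_components V (F \<union> G) + card G"
    using insert by simp
  also have "num_components V (F \<union> G) \<le> num_components V (insert E (F \<union> G)) + 1"
    unfolding E by (rule num_components_insert[OF assms(1)])
  finally show ?case using insert by simp
qed simp

lemma is_tree_finite:
  assumes "is_tree V T" "finite V"
  shows "finite T"
proof -
  have "T \<subseteq> Pow V" using assms(1) unfolding is_tree_def by auto
  then show ?thesis using assms(2) by (meson finite_Pow_iff rev_finite_subset)
qed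

text \<open>The edges inside \<open>S\<close> leave the vertices outside \<open>S\<close> isolated, so they span at least
  \<open>|V - S| + 1\<close> components, and each of the remaining edges of the connected tree
  removes at most one of them.\<close>

lemma tree_card_edges_within:
  assumes tree: "is_tree V T" and "finite V" and "S \<subseteq> V" "S \<noteq> {}"
  shows "card {E \<in> T. E \<subseteq> S} + 1 \<le> card S"
proof -
  let ?TS = "{E \<in> T. E \<subseteq> S}"
  let ?class = "\<lambda>x. graph_conn ?TS `` {x}"
  have edges: "\<And>E. E \<in> T \<Longrightarrow> E \<subseteq> V \<and> card E = 2" and card_T: "card T = card V - 1"
    and connected: "\<And>x y. x \<in> V \<Longrightarrow> y \<in> V \<Longrightarrow> (x, y) \<in> graph_conn T"
    using tree unfolding is_tree_def graph_conn_def by auto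
  have fin_T: "finite T" using assms(1,2) by (rule is_tree_finite)
  obtain s where s: "s \<in> S" using assms(4) by blast
  have "num_components V T = 1"
  proof -
    have "graph_conn T `` {x} = graph_conn T `` {s}" if "x \<in> V" for x
      unfolding graph_conn_class_eq_iff using that s assms(3) connected by blast
    then have "(\<lambda>x. graph_conn T `` {x}) ` V = {graph_conn T `` {s}}"
      using s assms(3) by auto
    then show ?thesis unfolding num_components_def by simp
  qed
  moreover have "num_components V ?TS \<le> num_components V (?TS \<union> (T - ?TS)) + card (T - ?TS)"
    using assms(2) fin_T edges by (intro num_components_union) auto
  then have "num_components V ?TS \<le> num_components V T + card (T - ?TS)"
    by (simp add: Un_absorb1)
  moreover have "card (T - ?TS) = card T - card ?TS"
    using fin_T by (intro card_Diff_subset) auto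
  moreover have "card (V - S) + 1 \<le> num_components V ?TS"
  proof -
    have closed: "E \<subseteq> S" if "E \<in> ?TS" for E using that by blast
    have isolated: "?class x = {x}" if "x \<notin> S" for x
      using graph_conn_closed[of x _ ?TS "{x}"] graph_conn_refl[of x ?TS] that by blast
    have "?class s \<subseteq> S"
      using graph_conn_closed[of s _ ?TS S] s by blast
    then have "?class s \<notin> (\<lambda>x. {x}) ` (V - S)" by auto
    moreover have "inj_on (\<lambda>x. {x}) (V - S)" by (simp add: inj_on_def)
    ultimately have "card (insert (?class s) ((\<lambda>x. {x}) ` (V - S))) = card (V - S) + 1"
      using assms(2) by (simp add: card_image)
    moreover have "insert (?class s) ((\<lambda>x. {x}) ` (V - S)) \<subseteq> ?class ` V"
      using s assms(3) isolated by auto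
    then have "card (insert (?class s) ((\<lambda>x. {x}) ` (V - S))) \<le> num_components V ?TS"
      unfolding num_components_def using assms(2) by (intro card_mono) auto
    ultimately show ?thesis by simp
  qed
  moreover have "card ?TS \<le> card T" using fin_T by (intro card_mono) auto
  moreover have "card (V - S) = card V - card S"
    using assms(2,3) by (meson card_Diff_subset finite_subset)
  moreover have "0 < card S" "card S \<le> card V"
    using assms(2-4) by (auto simp: card_gt_0_iff finite_subset card_mono)
  ultimately show ?thesis using card_T by linarith
qed

text \<open>Every edge on which \<open>d\<close> holds lies inside \<open>S = {L \<in> B\<^sub>+. d {L}}\<close>, and the tree has fewer
  edges inside \<open>S\<close> than \<open>S\<close> has elements.\<close>

lemma tree_edge_count_bound:
  fixes d :: "'a set \<Rightarrow> bool"
  assumes "finite B" "Bplus \<subseteq> B" "is_tree Bplus T"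
    and singleton: "\<And>L. L \<in> Bplus \<Longrightarrow> d {L} \<Longrightarrow> d {}"
    and edge: "\<And>E L. E \<in> T \<Longrightarrow> d E \<Longrightarrow> L \<in> E \<Longrightarrow> d {L}"
    and empty: "d {} \<Longrightarrow> \<exists>L\<in>B. d {L}"
  shows "of_bool (d {}) + card {E \<in> T. d E} \<le> card {L \<in> B. d {L}}"
proof -
  let ?S = "{L \<in> Bplus. d {L}}"
  have fin_Bplus: "finite Bplus" using assms(1,2) by (rule finite_subset[rotated])
  have fin_T: "finite T" using assms(3) fin_Bplus by (rule is_tree_finite)
  have edges: "\<And>E. E \<in> T \<Longrightarrow> E \<subseteq> Bplus \<and> card E = 2"
    using assms(3) unfolding is_tree_def by blast
  have "{E \<in> T. d E} \<subseteq> {E \<in> T. E \<subseteq> ?S}"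
    using edges edge by blast
  then have true_edges: "card {E \<in> T. d E} \<le> card {E \<in> T. E \<subseteq> ?S}"
    using fin_T by (intro card_mono) auto
  have no_edges_in_empty: "{E \<in> T. E \<subseteq> {}} = {}"
    using edges by fastforce
  have S_le: "card ?S \<le> card {L \<in> B. d {L}}"
    using assms(1,2) by (intro card_mono) auto
  consider "\<not> d {}" | "d {}" "?S = {}" | "?S \<noteq> {}"
    by blast
  then show ?thesis
  proof cases
    case 1
    then have S_empty: "?S = {}" using singleton by blast
    have "card {E \<in> T. d E} = 0"
      using true_edges unfolding S_empty no_edges_in_empty by simp
    then show ?thesis using 1 by simp
  next
    case 2
    then obtain L where "L \<in> B" "d {L}" using empty by blast
    then have "0 < card {L \<in> B. d {L}}" using assms(1) by (auto simp: card_gt_0_iff)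
    moreover have "card {E \<in> T. d E} = 0"
      using true_edges unfolding 2(2) no_edges_in_empty by simp
    ultimately show ?thesis using 2 by simp
  next
    case 3
    then have "card {E \<in> T. E \<subseteq> ?S} + 1 \<le> card ?S"
      by (intro tree_card_edges_within[OF assms(3) fin_Bplus]) auto
    then show ?thesis using true_edges S_le by (cases "d {}") simp_all
  qed
qed

lemma lit_val_flip:
  "lit_val L (c(i := \<not> c i)) \<longleftrightarrow> (if fst L = i then \<not> lit_val L c else lit_val L c)"
  by (simp add: lit_val_def)

lemma lit_val_complement: "fst L' = fst L \<Longrightarrow> L' \<noteq> L \<Longrightarrow> lit_val L' c \<longleftrightarrow> \<not> lit_val L c"
  by (cases L; cases L') (auto simp: lit_val_def)

lemma pos_monotonic_flip:
  assumes "pos_monotonic \<Omega> C Dpo L" "\<omega> \<in> \<Omega>" "assignment C c" "fst L \<in> C"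
    and "\<not> lit_val L c" "Dpo c \<omega>"
  shows "Dpo (c(fst L := \<not> c (fst L))) \<omega>"
proof -
  let ?c' = "c(fst L := \<not> c (fst L))"
  have "assignment C ?c'" using assms(3,4) by (auto simp: assignment_def)
  moreover have "lit_val L ?c'" using assms(5) by (simp add: lit_val_flip)
  moreover have "\<forall>i. i \<noteq> fst L \<longrightarrow> ?c' i = c i" by simp
  ultimately show ?thesis
    using assms(1,2,3,5,6) unfolding pos_monotonic_def by blast
qed

text \<open>An active sufficient cause misses some literal \<open>L\<close> of \<open>B\<close>, and switching \<open>L\<close> off leaves it
  active.\<close>

lemma suff_cause_rep_flip:
  assumes rep: "suff_cause_rep \<Omega> C Dpo R" and not_sub: "\<forall>(A, Bi)\<in>set R. \<not> B \<subseteq> Bi"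
    and "B \<subseteq> lits C" "\<omega> \<in> \<Omega>" "assignment C c" "conj_val B c" "Dpo c \<omega>"
  shows "\<exists>L\<in>B. Dpo (c(fst L := \<not> c (fst L))) \<omega>"
proof -
  have Dpo_iff: "Dpo c' \<omega> \<longleftrightarrow> (\<exists>(A, Bi)\<in>set R. A \<omega> \<and> conj_val Bi c')"
    if "assignment C c'" for c'
    using rep assms(4) that unfolding suff_cause_rep_def by blast
  obtain A Bj where ABj: "(A, Bj) \<in> set R" "A \<omega>" "conj_val Bj c"
    using Dpo_iff[OF assms(5)] assms(7) by blast
  obtain L where L: "L \<in> B" "L \<notin> Bj" using not_sub ABj(1) by blast
  let ?c' = "c(fst L := \<not> c (fst L))"
  have L_true: "lit_val L c" using assms(6) L(1) by (simp add: conj_val_def)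
  have "conj_val Bj ?c'"
    unfolding conj_val_def
  proof
    fix L' assume "L' \<in> Bj"
    then have "lit_val L' c" "L' \<noteq> L" using ABj(3) L(2) by (auto simp: conj_val_def)
    then show "lit_val L' ?c'"
      using L_true lit_val_complement[of L' L c] by (auto simp: lit_val_flip)
  qed
  moreover have "assignment C ?c'"
    using assms(3,5) L(1) by (auto simp: assignment_def lits_def)
  ultimately have "Dpo ?c' \<omega>" using Dpo_iff ABj(1,2) by blast
  then show ?thesis using L(1) by blast
qed

lemma consistent_lits_finite:
  assumes "consistent_lits C B" "finite C"
  shows "finite B"
proof (rule finite_subset)
  show "B \<subseteq> C \<times> UNIV" using assms(1) unfolding consistent_lits_def lits_def by blast
  show "finite (C \<times> (UNIV :: bool set))" using assms(2) by simp
qed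

lemma consistent_lits_covers:
  assumes "consistent_lits C B" "finite C" "card B = card C" "i \<in> C"
  shows "\<exists>p. (i, p) \<in> B"
proof -
  have "inj_on fst B"
  proof (rule inj_onI)
    fix L L' assume "L \<in> B" "L' \<in> B" "fst L = fst L'"
    then show "L = L'"
      using assms(1) unfolding consistent_lits_def by (metis (full_types) prod.collapse)
  qed
  moreover have "fst ` B \<subseteq> C" using assms(1) unfolding consistent_lits_def lits_def by auto
  ultimately have "fst ` B = C"
    using assms(2,3) by (simp add: card_image card_subset_eq)
  then show ?thesis using assms(4) by force
qed

text \<open>The value of \<open>C\<close> on the conditioning event \<open>{B - E = 1, E = 0, C\<^sub>2 = c\<^sub>2}\<close>.\<close>

definition lits_assignment :: "'i literal set \<Rightarrow> 'i set \<Rightarrow> ('i \<Rightarrow> bool) \<Rightarrow> 'i literal set \<Rightarrow> 'i \<Rightarrow> bool" where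
  "lits_assignment B C2 c2 E i =
     (if i \<in> C2 then c2 i
      else if (i, True) \<in> B then (i, True) \<notin> E
      else (i, False) \<in> B \<and> (i, False) \<in> E)"

lemma lit_val_lits_assignment:
  assumes "consistent_lits C1 B" "C1 \<inter> C2 = {}" "L \<in> B"
  shows "lit_val L (lits_assignment B C2 c2 E) \<longleftrightarrow> L \<notin> E"
proof -
  obtain i p where L: "L = (i, p)" by (cases L)
  have "i \<notin> C2" using assms L unfolding consistent_lits_def lits_def by auto
  moreover have "\<not> p \<Longrightarrow> (i, True) \<notin> B" using assms(1,3) L unfolding consistent_lits_def by auto
  ultimately show ?thesis using L assms(3) by (cases p) (simp_all add: lit_val_def lits_assignment_def)
qed

lemma assignment_lits_assignment:
  assumes "consistent_lits C1 B"
  shows "assignment (C1 \<union> C2) (lits_assignment B C2 c2 E)"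
  using assms unfolding assignment_def consistent_lits_def lits_def lits_assignment_def by auto

lemma lits_assignment_insert:
  assumes "consistent_lits C1 B" "C1 \<inter> C2 = {}" "L \<in> B" "L \<notin> E"
  shows "lits_assignment B C2 c2 (insert L E)
    = (lits_assignment B C2 c2 E)(fst L := \<not> lits_assignment B C2 c2 E (fst L))"
proof
  fix i
  obtain j p where L: "L = (j, p)" by (cases L)
  have "j \<notin> C2" using assms L unfolding consistent_lits_def lits_def by auto
  moreover have "\<not> p \<Longrightarrow> (j, True) \<notin> B" using assms(1,3) L unfolding consistent_lits_def by auto
  ultimately show "lits_assignment B C2 c2 (insert L E) i
      = ((lits_assignment B C2 c2 E)(fst L := \<not> lits_assignment B C2 c2 E (fst L))) i"
    using L assms(3,4) by (cases p) (auto simp: lits_assignment_def)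
qed

lemma cond_event_eq_obs:
  assumes "consistent_lits C1 B" "C1 \<inter> C2 = {}" "\<And>i. i \<in> C1 \<Longrightarrow> \<exists>p. (i, p) \<in> B"
  shows "cond_event M X B E C2 c2 W w =
    {\<omega> \<in> space M. obs (C1 \<union> C2) X \<omega> = lits_assignment B C2 c2 E} \<inter> {\<omega> \<in> space M. W \<omega> = w}"
proof -
  let ?c = "lits_assignment B C2 c2 E"
  have var_in_C1: "fst L \<in> C1" if "L \<in> B" for L
    using assms(1) that unfolding consistent_lits_def lits_def by auto
  have "((\<forall>L\<in>B. lit_val L (\<lambda>i. X i \<omega>) \<longleftrightarrow> L \<notin> E) \<and> (\<forall>i\<in>C2. X i \<omega> = c2 i))
      \<longleftrightarrow> obs (C1 \<union> C2) X \<omega> = ?c" for \<omega>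
  proof
    assume events: "(\<forall>L\<in>B. lit_val L (\<lambda>i. X i \<omega>) \<longleftrightarrow> L \<notin> E) \<and> (\<forall>i\<in>C2. X i \<omega> = c2 i)"
    show "obs (C1 \<union> C2) X \<omega> = ?c"
    proof
      fix i
      consider "i \<in> C2" | "i \<in> C1" "i \<notin> C2" | "i \<notin> C1 \<union> C2" by blast
      then show "obs (C1 \<union> C2) X \<omega> i = ?c i"
      proof cases
        case 2
        then obtain p where ip: "(i, p) \<in> B" using assms(3) by blast
        then have "lit_val (i, p) (\<lambda>i. X i \<omega>) \<longleftrightarrow> lit_val (i, p) ?c"
          using events lit_val_lits_assignment[OF assms(1,2) ip, of c2 E] by simp
        then show ?thesis using 2 by (cases p) (simp_all add: obs_def lit_val_def)
      qed (use events assignment_lits_assignment[OF assms(1), of C2 c2 E] in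
        \<open>auto simp: obs_def assignment_def lits_assignment_def\<close>)
    qed
  next
    assume obs: "obs (C1 \<union> C2) X \<omega> = ?c"
    then have val: "X i \<omega> = ?c i" if "i \<in> C1 \<union> C2" for i
      using that by (auto simp: obs_def dest: fun_cong[of _ _ i])
    have "lit_val L (\<lambda>i. X i \<omega>) \<longleftrightarrow> L \<notin> E" if "L \<in> B" for L
      using val[of "fst L"] var_in_C1[OF that] lit_val_lits_assignment[OF assms(1,2) that, of c2 E]
      by (cases "snd L") (simp_all add: lit_val_def)
    moreover have "X i \<omega> = c2 i" if "i \<in> C2" for i
      using val[of i] that by (simp add: lits_assignment_def)
    ultimately show "(\<forall>L\<in>B. lit_val L (\<lambda>i. X i \<omega>) \<longleftrightarrow> L \<notin> E) \<and> (\<forall>i\<in>C2. X i \<omega> = c2 i)"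
      by blast
  qed
  then show ?thesis unfolding cond_event_def by blast
qed

lemma potential_outcomes_tree_count:
  fixes c2 :: "'i \<Rightarrow> bool"
  assumes rep: "suff_cause_rep \<Omega> (C1 \<union> C2) Dpo R" and not_sub: "\<forall>(A, Bi)\<in>set R. \<not> B \<subseteq> Bi"
    and cons: "consistent_lits C1 B" and disj: "C1 \<inter> C2 = {}"
    and "finite B" "Bplus \<subseteq> B" "is_tree Bplus T"
    and pos: "\<And>L. L \<in> Bplus \<Longrightarrow> pos_monotonic \<Omega> (C1 \<union> C2) Dpo L" and "\<omega> \<in> \<Omega>"
  defines "d \<equiv> \<lambda>E. Dpo (lits_assignment B C2 c2 E) \<omega>"
  shows "of_bool (d {}) + card {E \<in> T. d E} \<le> card {L \<in> B. d {L}}"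
proof (rule tree_edge_count_bound[OF assms(5-7)])
  let ?c = "lits_assignment B C2 c2"
  have asg: "assignment (C1 \<union> C2) (?c E)" for E
    by (rule assignment_lits_assignment[OF cons])
  have B_lits: "B \<subseteq> lits (C1 \<union> C2)"
    using cons unfolding consistent_lits_def lits_def by blast
  have mono: "d E" if "L \<in> Bplus" "L \<notin> E" "d (insert L E)" for L E
  proof -
    have L: "L \<in> B" using that(1) assms(6) by blast
    let ?c' = "?c (insert L E)"
    have "\<not> lit_val L ?c'" by (simp add: lit_val_lits_assignment[OF cons disj L])
    moreover have "fst L \<in> C1 \<union> C2" using B_lits L unfolding lits_def by auto
    ultimately have "Dpo (?c'(fst L := \<not> ?c' (fst L))) \<omega>"
      using pos_monotonic_flip[OF pos[OF that(1)] \<open>\<omega> \<in> \<Omega>\<close> asg] that(3) unfolding d_def by blast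
    moreover have "?c'(fst L := \<not> ?c' (fst L)) = ?c E"
      by (simp add: lits_assignment_insert[OF cons disj L that(2)])
    ultimately show ?thesis unfolding d_def by simp
  qed
  show "d {}" if "L \<in> Bplus" "d {L}" for L
    using mono[of L "{}"] that by simp
  show "d {L}" if E: "E \<in> T" and "d E" and "L \<in> E" for E L
  proof -
    have "card E = 2" "E \<subseteq> Bplus" using E assms(7) unfolding is_tree_def by blast+
    then obtain x y where xy: "E = {x, y}" "x \<noteq> y" by (meson card_2_iff)
    define L' where "L' = (if L = x then y else x)"
    have "E = insert L' {L}" "L' \<noteq> L"
      using xy \<open>L \<in> E\<close> unfolding L'_def by auto
    then show ?thesis using mono[of L' "{L}"] \<open>d E\<close> \<open>E \<subseteq> Bplus\<close> by blast
  qed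
  show "\<exists>L\<in>B. d {L}" if D_all: "d {}"
  proof -
    have "conj_val B (?c {})"
      unfolding conj_val_def using lit_val_lits_assignment[OF cons disj] by blast
    then obtain L where L: "L \<in> B" "Dpo ((?c {})(fst L := \<not> ?c {} (fst L))) \<omega>"
      using suff_cause_rep_flip[OF rep not_sub B_lits \<open>\<omega> \<in> \<Omega>\<close> asg] D_all unfolding d_def by blast
    then have "Dpo (?c {L}) \<omega>"
      using lits_assignment_insert[OF cons disj L(1), of "{}" c2] by simp
    then show ?thesis using L(1) unfolding d_def by blast
  qed
qed

lemma (in finite_measure) sum_measure_mono_indicator:
  fixes A :: "'x \<Rightarrow> 'a set" and A' :: "'y \<Rightarrow> 'a set"
  assumes "finite I" "finite J" "\<And>i. i \<in> I \<Longrightarrow> A i \<in> sets M" "\<And>j. j \<in> J \<Longrightarrow> A' j \<in> sets M"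
    and "\<And>\<omega>. \<omega> \<in> space M \<Longrightarrow> (\<Sum>i\<in>I. indicator (A i) \<omega>) \<le> (\<Sum>j\<in>J. indicator (A' j) \<omega> :: real)"
  shows "(\<Sum>i\<in>I. measure M (A i)) \<le> (\<Sum>j\<in>J. measure M (A' j))"
proof -
  have integrable: "integrable M (indicator S :: 'a \<Rightarrow> real)" if "S \<in> sets M" for S
    using that by (simp add: less_top[symmetric])
  have integral: "integral\<^sup>L M (indicator S) = measure M S" if "S \<in> sets M" for S
    using that by (simp add: Int_absorb2 sets.sets_into_space)
  have "(\<Sum>i\<in>I. measure M (A i)) = (\<integral>\<omega>. (\<Sum>i\<in>I. indicator (A i) \<omega>) \<partial>M)"
    using assms(3) integrable integral by (simp add: integral_sum)
  also have "\<dots> \<le> (\<integral>\<omega>. (\<Sum>j\<in>J. indicator (A' j) \<omega>) \<partial>M)"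
    using assms(3-5) integrable by (intro integral_mono integrable_sum) auto
  also have "\<dots> = (\<Sum>j\<in>J. measure M (A' j))"
    using assms(4) integrable integral by (simp add: integral_sum)
  finally show ?thesis .
qed

lemma (in prob_space) tree_contrast_measure_le:
  fixes c2 :: "'i \<Rightarrow> bool"
  assumes "suff_cause_rep (space M) (C1 \<union> C2) Dpo R" "\<forall>(A, Bi)\<in>set R. \<not> B \<subseteq> Bi"
    and cons: "consistent_lits C1 B" and "C1 \<inter> C2 = {}" and fin_B: "finite B"
    and "Bplus \<subseteq> B" and tree: "is_tree Bplus T"
    and "\<And>L. L \<in> Bplus \<Longrightarrow> pos_monotonic (space M) (C1 \<union> C2) Dpo L"
    and "S \<in> sets M" and "\<And>c. assignment (C1 \<union> C2) c \<Longrightarrow> {\<omega> \<in> space M. Dpo c \<omega>} \<in> sets M"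
  defines "A \<equiv> \<lambda>E. {\<omega> \<in> space M. Dpo (lits_assignment B C2 c2 E) \<omega>} \<inter> S"
  shows "measure M (A {}) + (\<Sum>E\<in>T. measure M (A E)) \<le> (\<Sum>L\<in>B. measure M (A {L}))"
proof -
  have "finite Bplus" using fin_B assms(6) by (rule finite_subset[rotated])
  with tree have fin_T: "finite T" by (rule is_tree_finite)
  have "{} \<notin> T" using tree unfolding is_tree_def by fastforce
  have meas: "A E \<in> sets M" for E
    unfolding A_def using assms(9,10) assignment_lits_assignment[OF cons] by blast
  have "measure M (A {}) + (\<Sum>E\<in>T. measure M (A E)) = (\<Sum>E\<in>insert {} T. measure M (A E))"
    using fin_T \<open>{} \<notin> T\<close> by simp
  also have "\<dots> \<le> (\<Sum>L\<in>B. measure M (A {L}))"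
  proof (rule sum_measure_mono_indicator)
    fix \<omega> assume "\<omega> \<in> space M"
    let ?d = "\<lambda>E. Dpo (lits_assignment B C2 c2 E) \<omega>"
    have count: "of_bool (?d {}) + card {E \<in> T. ?d E} \<le> card {L \<in> B. ?d {L}}"
      using potential_outcomes_tree_count[OF assms(1-7) assms(8) \<open>\<omega> \<in> space M\<close>] by blast
    have "(\<Sum>E\<in>insert {} T. of_bool (?d E)) = of_bool (?d {}) + (\<Sum>E\<in>T. of_bool (?d E) :: real)"
      using fin_T \<open>{} \<notin> T\<close> by (rule sum.insert)
    also have "\<dots> \<le> (\<Sum>L\<in>B. of_bool (?d {L}))"
      using of_nat_mono[OF count, where 'a=real] fin_T fin_B by (simp add: Collect_conj_eq Int_commute)
    finally show "(\<Sum>E\<in>insert {} T. indicator (A E) \<omega>) \<le> (\<Sum>L\<in>B. indicator (A {L}) \<omega> :: real)"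
      using \<open>\<omega> \<in> space M\<close> unfolding A_def by (cases "\<omega> \<in> S") (simp_all add: indicator_def)
  qed (use fin_T fin_B meas in simp_all)
  finally show ?thesis .
qed

text \<open>Consistency identifies \<open>D\<close> with \<open>D\<^sub>c\<close> on \<open>{C = c}\<close>, and conditional independence of \<open>D\<^sub>c\<close>
  and \<open>C\<close> given \<open>W = w\<close> then removes the conditioning on \<open>C = c\<close>.\<close>

lemma cond_exp_bin_adjusted:
  assumes "prob_space M" and W_meas: "{\<omega> \<in> space M. W \<omega> = w} \<in> sets M"
    and "assignment C c" and consistency: "\<And>\<omega>. \<omega> \<in> space M \<Longrightarrow> D \<omega> = Dpo (obs C X \<omega>) \<omega>"
    and "adjusts M C X Dpo W"
    and pos: "0 < measure M ({\<omega> \<in> space M. obs C X \<omega> = c} \<inter> {\<omega> \<in> space M. W \<omega> = w})"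
  shows "cond_exp_bin M D ({\<omega> \<in> space M. obs C X \<omega> = c} \<inter> {\<omega> \<in> space M. W \<omega> = w})
    = measure M ({\<omega> \<in> space M. Dpo c \<omega>} \<inter> {\<omega> \<in> space M. W \<omega> = w})
      / measure M {\<omega> \<in> space M. W \<omega> = w}"
proof -
  interpret prob_space M by fact
  let ?O = "{\<omega> \<in> space M. obs C X \<omega> = c}"
  let ?W = "{\<omega> \<in> space M. W \<omega> = w}"
  let ?D = "{\<omega> \<in> space M. Dpo c \<omega>}"
  have "measure M (?O \<inter> ?W) \<le> measure M ?W" using W_meas by (intro finite_measure_mono) auto
  then have W_pos: "0 < measure M ?W" using pos by linarith
  have "(\<integral>\<omega>. indicator (?O \<inter> ?W) \<omega> * (if D \<omega> then 1 else 0) \<partial>M)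
      = (\<integral>\<omega>. indicator (?D \<inter> ?O \<inter> ?W) \<omega> \<partial>M :: real)"
    by (rule Bochner_Integration.integral_cong) (auto simp: indicator_def consistency)
  also have "\<dots> = measure M (?D \<inter> ?O \<inter> ?W)"
    by (simp add: Int_absorb2 Int_assoc)
  finally have cond_exp: "cond_exp_bin M D (?O \<inter> ?W) = measure M (?D \<inter> ?O \<inter> ?W) / measure M (?O \<inter> ?W)"
    unfolding cond_exp_bin_def by simp
  have "cond_prob M ({\<omega> \<in> space M. Dpo c \<omega> = True} \<inter> ?O) ?W
      = cond_prob M {\<omega> \<in> space M. Dpo c \<omega> = True} ?W * cond_prob M ?O ?W"
    using \<open>adjusts M C X Dpo W\<close> \<open>assignment C c\<close> W_pos unfolding adjusts_def by blast
  then have "measure M (?D \<inter> ?O \<inter> ?W) / measure M ?W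
      = measure M (?D \<inter> ?W) / measure M ?W * (measure M (?O \<inter> ?W) / measure M ?W)"
    unfolding cond_prob_def by simp
  then have "measure M (?D \<inter> ?O \<inter> ?W) = measure M (?D \<inter> ?W) * measure M (?O \<inter> ?W) / measure M ?W"
    using W_pos by (simp add: field_simps)
  then show ?thesis
    unfolding cond_exp using pos by simp
qed

lemma cond_exp_bin_cond_event:
  assumes "prob_space M" "{\<omega> \<in> space M. W \<omega> = w} \<in> sets M"
    and "\<And>\<omega>. \<omega> \<in> space M \<Longrightarrow> D \<omega> = Dpo (obs (C1 \<union> C2) X \<omega>) \<omega>" "adjusts M (C1 \<union> C2) X Dpo W"
    and "consistent_lits C1 B" "C1 \<inter> C2 = {}" "\<And>i. i \<in> C1 \<Longrightarrow> \<exists>p. (i, p) \<in> B"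
    and "0 < measure M (cond_event M X B E C2 c2 W w)"
  shows "cond_exp_bin M D (cond_event M X B E C2 c2 W w)
    = measure M ({\<omega> \<in> space M. Dpo (lits_assignment B C2 c2 E) \<omega>} \<inter> {\<omega> \<in> space M. W \<omega> = w})
      / measure M {\<omega> \<in> space M. W \<omega> = w}"
proof -
  have "cond_event M X B E C2 c2 W w
      = {\<omega> \<in> space M. obs (C1 \<union> C2) X \<omega> = lits_assignment B C2 c2 E} \<inter> {\<omega> \<in> space M. W \<omega> = w}"
    by (rule cond_event_eq_obs[OF assms(5-7)])
  then show ?thesis
    using cond_exp_bin_adjusted[OF assms(1,2) assignment_lits_assignment[OF assms(5)] assms(3,4)] assms(8)
    by simp
qed

theorem mainTheorem8:
  fixes M :: "'w measure"
    and C C1 C2 :: "'i set"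
    and X :: "'i \<Rightarrow> 'w \<Rightarrow> bool"
    and D :: "'w \<Rightarrow> bool"
    and Dpo :: "('i \<Rightarrow> bool) \<Rightarrow> 'w \<Rightarrow> bool"
    and W :: "'w \<Rightarrow> 'v"
    and B Bplus Bprime :: "'i literal set"
    and T :: "'i literal set set"
    and c2 :: "'i \<Rightarrow> bool"
    and w :: 'v
  assumes "prob_space M"
    and "finite C"
    and "C = C1 \<union> C2" and "C1 \<inter> C2 = {}"
    and "\<And>i. i \<in> C \<Longrightarrow> {\<omega> \<in> space M. X i \<omega>} \<in> sets M"
    and "\<And>v. {\<omega> \<in> space M. W \<omega> = v} \<in> sets M"
    and "{\<omega> \<in> space M. D \<omega>} \<in> sets M"
    and "\<And>c. assignment C c \<Longrightarrow> {\<omega> \<in> space M. Dpo c \<omega>} \<in> sets M"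
    and consistency: "\<And>\<omega>. \<omega> \<in> space M \<Longrightarrow> D \<omega> = Dpo (obs C X \<omega>) \<omega>"
    and "B = Bplus \<union> Bprime" and "Bplus \<inter> Bprime = {}"
    and "consistent_lits C1 B"
    and "card B = card C1"
    and "\<And>L. L \<in> Bplus \<Longrightarrow> pos_monotonic (space M) C Dpo L"
    and "adjusts M C X Dpo W"
    and "is_tree Bplus T"
    and "measure M (cond_event M X B {} C2 c2 W w) > 0"
    and "\<And>L. L \<in> B \<Longrightarrow> measure M (cond_event M X B {L} C2 c2 W w) > 0"
    and "\<And>E. E \<in> T \<Longrightarrow> measure M (cond_event M X B E C2 c2 W w) > 0"
    and "cond_exp_bin M D (cond_event M X B {} C2 c2 W w)
         - (\<Sum>L\<in>B. cond_exp_bin M D (cond_event M X B {L} C2 c2 W w))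
         + (\<Sum>E\<in>T. cond_exp_bin M D (cond_event M X B E C2 c2 W w)) > 0"
  shows "irreducible (space M) C Dpo B"
proof -
  interpret prob_space M by fact
  note C_split = \<open>C = C1 \<union> C2\<close>
  let ?W = "{\<omega> \<in> space M. W \<omega> = w}"
  define m where "m E = measure M ({\<omega> \<in> space M. Dpo (lits_assignment B C2 c2 E) \<omega>} \<inter> ?W)" for E
  have fin_C1: "finite C1" using assms(2,3) by simp
  have fin_B: "finite B" by (rule consistent_lits_finite[OF assms(12) fin_C1])
  have covers: "\<And>i. i \<in> C1 \<Longrightarrow> \<exists>p. (i, p) \<in> B"
    by (rule consistent_lits_covers[OF assms(12) fin_C1 assms(13)])
  have cond_exp: "cond_exp_bin M D (cond_event M X B E C2 c2 W w) = m E / measure M ?W"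
    if "0 < measure M (cond_event M X B E C2 c2 W w)" for E
    unfolding m_def using assms(1,6) consistency[unfolded C_split] assms(15)[unfolded C_split]
      assms(12,4) covers that by (rule cond_exp_bin_cond_event)
  have "measure M (cond_event M X B {} C2 c2 W w) \<le> measure M ?W"
    using assms(6) by (intro finite_measure_mono) (auto simp: cond_event_def)
  then have W_pos: "0 < measure M ?W" using assms(17) by linarith
  have "0 < (m {} - (\<Sum>L\<in>B. m {L}) + (\<Sum>E\<in>T. m E)) / measure M ?W"
    using assms(20) cond_exp assms(17-19)
    by (simp add: sum_divide_distrib diff_divide_distrib add_divide_distrib)
  then have contrast: "(\<Sum>L\<in>B. m {L}) < m {} + (\<Sum>E\<in>T. m E)"
    using W_pos by (simp add: zero_less_divide_iff)
  show ?thesis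
    unfolding irreducible_def
  proof (intro allI impI, rule ccontr)
    fix R assume rep: "suff_cause_rep (space M) C Dpo R" and "\<not> (\<exists>(A, Bi)\<in>set R. B \<subseteq> Bi)"
    then have "\<forall>(A, Bi)\<in>set R. \<not> B \<subseteq> Bi" by blast
    moreover have "Bplus \<subseteq> B" using assms(10) by blast
    ultimately have "m {} + (\<Sum>E\<in>T. m E) \<le> (\<Sum>L\<in>B. m {L})"
      unfolding m_def using assms(4,6,8,12,14,16) rep fin_B unfolding C_split
      by (intro tree_contrast_measure_le)
    with contrast show False by linarith
  qed
qed

end
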